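(* Let $\lambda\in(0,1)$ with $\lambda\neq1-\frac1{2n}$ for all $n\in\mathbb{N}$, and let $\tau_0,\tau_{1/4},X_L,W,\nu_\lambda,\mathcal{W}_0,W^\omega,\tau_\omega$ be as in the context. Then the partial sums $S_n(x)=\sum_{\omega\in\mathcal{W}_0,\ |\omega|\le n}W^\omega(x)\,|\hat\nu_\lambda(\tau_\omega x)|^2$ converge to $1$ uniformly on $X_L$.
   Context: $\tau_0(x)=\lambda x$, $\tau_{1/4}(x)=\lambda(x+\frac14)$; $X_L$ is the unique nonempty compact set with $X_L=\tau_0(X_L)\cup\tau_{1/4}(X_L)$; $W(x)=\cos^2(2\pi x/\lambda)$. $\nu_\lambda$ is the unique Borel probability measure on $\mathbb{R}$ with $\nu_\lambda=\frac12(\nu_\lambda\circ\tau_+^{-1}+\nu_\lambda\circ\tau_-^{-1})$, $\tau_\pm(x)=\lambda x\pm1$, and $\hat\nu_\lambda(t)=\int e^{2\pi ixt}d\nu_\lambda(x)$. $\mathcal{W}_0=\{\emptyset\}\cup\{\omega_1\dots\omega_n: n\ge1,\ \omega_i\in\{0,\frac14\},\ \omega_n=\frac14\}$, $|\omega|$ is word length. For $\omega=\omega_1\dots\omega_n$: $\tau_\omega x=\tau_{\omega_n}\cdots\tau_{\omega_1}x$, $W^\omega(x)=\prod_{k=1}^nW(\tau_{\omega_k}\cdots\tau_{\omega_1}x)$; $\tau_\emptyset x=x$, $W^\emptyset=1$. *)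

theory Defs
  imports "HOL-Probability.Probability"
begin

definition tau :: "real \<Rightarrow> real \<Rightarrow> real \<Rightarrow> real" where
  "tau lam d x = lam * (x + d)"

definition XL :: "real \<Rightarrow> real set" where
  "XL lam = (THE X. X \<noteq> {} \<and> compact X \<and> X = tau lam 0 ` X \<union> tau lam (1/4) ` X)"

definition Wfun :: "real \<Rightarrow> real \<Rightarrow> real" where
  "Wfun lam x = (cos (2 * pi * x / lam))\<^sup>2"

definition nu :: "real \<Rightarrow> real measure" where
  "nu lam = (THE M. prob_space M \<and> sets M = sets borel \<and>
     (\<forall>A \<in> sets borel. emeasure M A =
        (emeasure M ((\<lambda>x. lam * x + 1) -` A) + emeasure M ((\<lambda>x. lam * x - 1) -` A)) / 2))"

definition nu_hat :: "real \<Rightarrow> real \<Rightarrow> complex" where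
  "nu_hat lam t = integral\<^sup>L (nu lam) (\<lambda>x. cis (2 * pi * x * t))"

definition W0 :: "real list set" where
  "W0 = {[]} \<union> {w. w \<noteq> [] \<and> set w \<subseteq> {0, 1/4} \<and> last w = 1/4}"

definition tau_word :: "real \<Rightarrow> real list \<Rightarrow> real \<Rightarrow> real" where
  "tau_word lam w x = foldl (\<lambda>y d. tau lam d y) x w"

definition W_word :: "real \<Rightarrow> real list \<Rightarrow> real \<Rightarrow> real" where
  "W_word lam w x = (\<Prod>k<length w. Wfun lam (tau_word lam (take (Suc k) w) x))"

definition S_partial :: "real \<Rightarrow> nat \<Rightarrow> real \<Rightarrow> real" where
  "S_partial lam n x = (\<Sum>w \<in> {w \<in> W0. length w \<le> n}.
      W_word lam w x * (cmod (nu_hat lam (tau_word lam w x)))\<^sup>2)"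

end

theory Submission
  imports Defs
begin

(*
  Let T g (x) = W(tau_0 x) g(tau_0 x) + W(tau_{1/4} x) g(tau_{1/4} x) and f = |nu_hat|^2.
  The self-similarity of nu gives nu_hat(t) = cos(2 pi t) nu_hat(lam t), i.e.
  f(x) = W(tau_0 x) f(tau_0 x); hence the terms of a word and of the same word followed by 0
  coincide, S_n = T^n f, and f <= T f. Since T is positive with T 1 = 1, the S_n increase to a
  fixed point h <= 1 of T. On the minimisers of h over X_L the averaging identity h = T h
  forces every branch of positive weight to stay among the minimisers; rescaled by 4, the
  weights vanish only at odd resp. even integers, and a descent argument (the place where
  lam <> 1 - 1/(2n) is used) shows that 0 is a minimiser. As h(0) >= f(0) = 1, h = 1 on X_L,
  and Dini's theorem makes the convergence uniform.
*)

section \<open>Nested sets and increasing sequences of continuous functions\<close>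

lemma INT_Un_decseq:
  assumes A: "decseq A" and B: "decseq B"
  shows "(\<Inter>n. A n \<union> B n) = (\<Inter>n. A n) \<union> (\<Inter>n. B n)"
proof (intro equalityI subsetI)
  fix x assume x: "x \<in> (\<Inter>n. A n \<union> B n)"
  show "x \<in> (\<Inter>n. A n) \<union> (\<Inter>n. B n)"
  proof (cases "\<forall>n. x \<in> A n")
    case False
    then obtain n0 where n0: "x \<notin> A n0" by blast
    have "x \<in> B n" for n
    proof -
      have "x \<notin> A (max n n0)" using n0 decseqD[OF A, of n0 "max n n0"] by auto
      then have "x \<in> B (max n n0)" using x by blast
      then show ?thesis using decseqD[OF B, of n "max n n0"] by auto
    qed
    then show ?thesis by blast
  qed blast
qed blast


lemma closedin_sublevel_continuous_on:
  fixes f :: "'a::topological_space \<Rightarrow> real"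
  assumes "continuous_on X f"
  obtains A where "closed A" "A \<inter> X = {x \<in> X. f x \<le> c}"
proof -
  obtain A where "closed A" "A \<inter> X = f -` {..c} \<inter> X"
    using assms unfolding continuous_on_closed_invariant by (meson closed_atMost)
  then show thesis by (intro that[of A]) auto
qed

lemma incseq_continuous_eventually_close:
  fixes S :: "nat \<Rightarrow> 'a::topological_space \<Rightarrow> real"
  assumes X: "compact X"
    and S: "\<And>n. continuous_on X (S n)" and g: "continuous_on X g"
    and inc: "\<And>x. x \<in> X \<Longrightarrow> incseq (\<lambda>n. S n x)"
    and lim: "\<And>x. x \<in> X \<Longrightarrow> (\<lambda>n. S n x) \<longlonglongrightarrow> g x"
    and e: "0 < e"
  obtains N where "\<And>x. x \<in> X \<Longrightarrow> g x - S N x < e"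
proof -
  have "\<exists>U. open U \<and> U \<inter> X = {x \<in> X. g x - S n x < e}" for n
  proof -
    have "continuous_on X (\<lambda>x. g x - S n x)" using g S by (rule continuous_on_diff)
    then obtain A where "open A" "A \<inter> X = (\<lambda>x. g x - S n x) -` {..<e} \<inter> X"
      unfolding continuous_on_open_invariant using open_lessThan by blast
    then show ?thesis by (intro exI[of _ A]) auto
  qed
  then obtain U where U: "\<And>n. open (U n)" "\<And>n. U n \<inter> X = {x \<in> X. g x - S n x < e}"
    by metis
  have cover: "X \<subseteq> (\<Union>n. U n)"
  proof
    fix x assume x: "x \<in> X"
    have "(\<lambda>n. g x - S n x) \<longlonglongrightarrow> g x - g x"
      by (intro tendsto_diff tendsto_const lim[OF x])
    then have "eventually (\<lambda>n. g x - S n x < e) sequentially"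
      using e by (intro order_tendstoD(2)) simp_all
    then obtain n where "g x - S n x < e" by (auto simp: eventually_sequentially)
    then show "x \<in> (\<Union>n. U n)" using U(2)[of n] x by blast
  qed
  obtain C where C: "finite C" "X \<subseteq> (\<Union>c\<in>C. U c)"
  proof (rule compactE_image[OF X, of UNIV U])
    show "open (U n)" for n by (rule U(1))
  qed (use cover that in auto)
  show thesis
  proof
    fix x assume x: "x \<in> X"
    obtain c where c: "c \<in> C" "x \<in> U c" using C(2) x by blast
    then have "c \<le> Max (insert 0 C)" using C(1) by simp
    then have "S c x \<le> S (Max (insert 0 C)) x" using inc[OF x] by (simp add: incseq_def)
    moreover have "g x - S c x < e" using U(2)[of c] c x by blast
    ultimately show "g x - S (Max (insert 0 C)) x < e" by simp
  qed
qed

lemma uniform_limit_incseq_Dini: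
  fixes S :: "nat \<Rightarrow> 'a::topological_space \<Rightarrow> real"
  assumes X: "compact X"
    and S: "\<And>n. continuous_on X (S n)" and g: "continuous_on X g"
    and inc: "\<And>x. x \<in> X \<Longrightarrow> incseq (\<lambda>n. S n x)"
    and lim: "\<And>x. x \<in> X \<Longrightarrow> (\<lambda>n. S n x) \<longlonglongrightarrow> g x"
  shows "uniform_limit X S g sequentially"
  unfolding uniform_limit_sequentially_iff
proof (intro allI impI)
  fix e :: real assume "0 < e"
  then obtain N where N: "\<And>x. x \<in> X \<Longrightarrow> g x - S N x < e"
    using incseq_continuous_eventually_close[OF X S g inc lim] by blast
  have "dist (S n x) (g x) < e" if "N \<le> n" "x \<in> X" for n x
  proof -
    have "S N x \<le> S n x" using inc[OF that(2)] that(1) by (simp add: incseq_def)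
    moreover have "S n x \<le> g x" using incseq_le[OF inc[OF that(2)] lim[OF that(2)]] .
    ultimately show ?thesis using N[OF that(2)] by (simp add: dist_real_def)
  qed
  then show "\<exists>N. \<forall>n\<ge>N. \<forall>x\<in>X. dist (S n x) (g x) < e" by blast
qed

text \<open>A supremum of continuous functions is lower semicontinuous, so it attains its infimum
  on a compact set.\<close>

lemma incseq_limit_attains_inf:
  fixes S :: "nat \<Rightarrow> 'a::heine_borel \<Rightarrow> real"
  assumes X: "compact X" "X \<noteq> {}"
    and S: "\<And>n. continuous_on X (S n)"
    and inc: "\<And>x. x \<in> X \<Longrightarrow> incseq (\<lambda>n. S n x)"
    and lim: "\<And>x. x \<in> X \<Longrightarrow> (\<lambda>n. S n x) \<longlonglongrightarrow> h x"
  obtains x where "x \<in> X" "\<And>y. y \<in> X \<Longrightarrow> h x \<le> h y"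
proof -
  have le_h: "S n x \<le> h x" if "x \<in> X" for n x by (rule incseq_le[OF inc[OF that] lim[OF that]])
  have below: "\<exists>x0\<in>X. \<forall>y\<in>X. S n x0 \<le> h y" for n
  proof -
    obtain x0 where "x0 \<in> X" "\<forall>y\<in>X. S n x0 \<le> S n y"
      using continuous_attains_inf[OF X S] by blast
    then show ?thesis using le_h by (meson order_trans)
  qed
  define m where "m = (INF y\<in>X. h y)"
  have bdd: "bdd_below (h ` X)"
    using below[of 0] by (auto intro: bdd_belowI2)
  define F where "F n = {x \<in> X. S n x \<le> m}" for n
  have "compact (F n)" for n
  proof -
    obtain A where "closed A" "A \<inter> X = F n"
      using closedin_sublevel_continuous_on[OF S] unfolding F_def by metis
    then show ?thesis using compact_Int_closed[OF X(1)] by (metis Int_commute)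
  qed
  moreover have "F n \<noteq> {}" for n
  proof -
    obtain x0 where "x0 \<in> X" "\<forall>y\<in>X. S n x0 \<le> h y" using below by blast
    then show ?thesis unfolding F_def m_def using X(2) by (auto intro!: cINF_greatest)
  qed
  moreover have "F n \<subseteq> F k" if "k \<le> n" for k n
  proof
    fix x assume "x \<in> F n"
    moreover from this have "S k x \<le> S n x"
      using inc that unfolding F_def incseq_def by blast
    ultimately show "x \<in> F k" unfolding F_def by simp
  qed
  ultimately have "\<Inter>(range F) \<noteq> {}" by (rule compact_nest)
  then obtain x where "x \<in> \<Inter>(range F)" by blast
  then have x: "x \<in> X" "\<And>n. S n x \<le> m" unfolding F_def by auto
  have "h x \<le> m" by (rule LIMSEQ_le_const2[OF lim[OF x(1)]]) (use x(2) in auto)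
  moreover have "m \<le> h y" if "y \<in> X" for y
    unfolding m_def by (rule cINF_lower[OF bdd that])
  ultimately show thesis using x(1) by (meson that order_trans)
qed

section \<open>A descent lemma\<close>

lemma descent_exponents_incompatible:
  fixes lam m :: real
  assumes lam: "0 < lam" "lam < 1" and m: "0 < m"
    and j1: "lam ^ j1 * (m + lam) = m" and j2: "lam ^ j2 * (m + lam\<^sup>2) = m"
  shows False
proof -
  have lam2: "lam\<^sup>2 < lam" using lam by (simp add: power2_eq_square)
  have "j2 < j1"
  proof (rule ccontr)
    assume "\<not> j2 < j1"
    then have "lam ^ j2 \<le> lam ^ j1" using lam by (simp add: power_decreasing)
    then have "lam ^ j2 * (m + lam\<^sup>2) < lam ^ j1 * (m + lam)"
      using lam m lam2 by (intro mult_le_less_imp_less) auto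
    then show False using j1 j2 by simp
  qed
  then have "lam ^ j1 \<le> lam ^ Suc j2" using lam by (intro power_decreasing) auto
  then have "lam ^ j1 * (m + lam) \<le> lam ^ Suc j2 * (m + lam)"
    using lam m by (intro mult_right_mono) auto
  then have "m \<le> lam ^ Suc j2 * (m + lam)" using j1 by simp
  also have "\<dots> = lam ^ j2 * (lam * m + lam\<^sup>2)" by (simp add: algebra_simps power2_eq_square)
  also have "\<dots> < lam ^ j2 * (m + lam\<^sup>2)" using lam m by simp
  also have "\<dots> = m" by (rule j2)
  finally show False by simp
qed

locale branch_closed_set =
  fixes lam :: real and Z :: "real set"
  assumes lam: "0 < lam" "lam < 1"
    and compact_Z: "compact Z"
    and Z_nonneg: "\<And>u. u \<in> Z \<Longrightarrow> 0 \<le> u"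
    and scale_mem: "\<And>u. u \<in> Z \<Longrightarrow> \<nexists>k::int. u = of_int (2 * k + 1) \<Longrightarrow> lam * u \<in> Z"
    and shift_mem: "\<And>u. u \<in> Z \<Longrightarrow> \<nexists>k::int. u = of_int (2 * k) \<Longrightarrow> lam * (u + 1) \<in> Z"
begin

text \<open>If the minimum \<open>m\<close> of \<open>Z\<close> is positive, it is an odd integer, so no point of the
  strip \<open>(m, m + 1)\<close> is an integer and repeated scaling by \<open>lam\<close> drives each point of
  \<open>Z\<close> in the strip down onto \<open>m\<close>.\<close>

context
  fixes m :: real
  assumes m_mem: "m \<in> Z" and m_min: "\<And>z. z \<in> Z \<Longrightarrow> m \<le> z" and m_pos: "0 < m"
begin

lemma min_odd_integer: "\<exists>k::int. 0 \<le> k \<and> m = of_int (2 * k + 1)"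
proof -
  have "\<exists>k::int. m = of_int (2 * k + 1)"
  proof (rule ccontr)
    assume "\<nexists>k::int. m = of_int (2 * k + 1)"
    then have "m \<le> lam * m" using scale_mem[OF m_mem] m_min by blast
    then show False using m_pos lam by (simp add: mult_le_cancel_right1)
  qed
  then obtain k :: int where "m = of_int (2 * k + 1)" by blast
  moreover have "0 \<le> k" using calculation m_pos by linarith
  ultimately show ?thesis by blast
qed

lemma strip_no_integer:
  assumes "m < u" "u < m + 1"
  shows "u \<noteq> of_int k"
proof -
  obtain j :: int where j: "m = of_int (2 * j + 1)" using min_odd_integer by blast
  show ?thesis
  proof
    assume "u = of_int k"
    then have "2 * j + 1 < k" "k < 2 * j + 2" using assms unfolding j by linarith+
    then show False by linarith
  qed
qed

lemma strip_scale_mem: "u \<in> Z \<Longrightarrow> m < u \<Longrightarrow> u < m + 1 \<Longrightarrow> lam * u \<in> Z"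
  using scale_mem strip_no_integer by blast

lemma strip_shift_mem: "u \<in> Z \<Longrightarrow> m < u \<Longrightarrow> u < m + 1 \<Longrightarrow> lam * (u + 1) \<in> Z"
  using shift_mem strip_no_integer by blast

lemma strip_descent:
  assumes x: "x \<in> Z" "m < x" "x < m + 1"
  obtains j where "1 \<le> j" "lam ^ j * x = m"
    "\<And>i. i < j \<Longrightarrow> lam ^ i * x \<in> Z \<and> m < lam ^ i * x \<and> lam ^ i * x < m + 1"
proof -
  have below: "lam ^ i * x < m + 1" for i
  proof -
    have "lam ^ i * x \<le> x" using lam x m_pos by (simp add: mult_le_cancel_right1 power_le_one)
    then show ?thesis using x(3) by linarith
  qed
  obtain n where "lam ^ n < m / x" using real_arch_pow_inv[of "m / x" lam] m_pos x(2) lam by auto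
  then have "lam ^ n * x \<le> m" using m_pos x(2) by (simp add: field_simps)
  then have ex: "\<exists>i. lam ^ i * x \<le> m" by blast
  define j where "j = (LEAST i. lam ^ i * x \<le> m)"
  have j_le: "lam ^ j * x \<le> m" unfolding j_def by (rule LeastI_ex[OF ex])
  have above: "m < lam ^ i * x" if "i < j" for i
    using not_less_Least[OF that[unfolded j_def]] by simp
  have mem: "lam ^ i * x \<in> Z" if "i \<le> j" for i
    using that
  proof (induction i)
    case (Suc i)
    then have "lam * (lam ^ i * x) \<in> Z"
      using strip_scale_mem above below by simp
    then show ?case by (simp add: mult.assoc)
  qed (simp add: x(1))
  have "lam ^ j * x = m" using j_le m_min[OF mem[OF order_refl]] by linarith
  moreover have "1 \<le> j" using j_le x(2) by (cases j) auto
  ultimately show thesis using that mem above below by simp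
qed

lemma strip_descent_last_step:
  assumes "x \<in> Z" "m < x" "x < m + 1"
  obtains y where "y \<in> Z" "m < y" "y < m + 1" "lam * y = m"
proof -
  obtain j where j: "1 \<le> j" "lam ^ j * x = m"
    "\<And>i. i < j \<Longrightarrow> lam ^ i * x \<in> Z \<and> m < lam ^ i * x \<and> lam ^ i * x < m + 1"
    using strip_descent[OF assms] by blast
  have "lam * (lam ^ (j - 1) * x) = m" using j(1,2) by (cases j) (simp_all add: mult.assoc)
  then show thesis using j(3)[of "j - 1"] j(1) by (intro that) auto
qed

lemma strip_descent_last_two_steps:
  assumes "x \<in> Z" "m < x" "x < m + 1" "lam * x \<noteq> m"
  obtains z where "z \<in> Z" "m < z" "z < m + 1" "lam * z \<in> Z" "m < lam * z" "lam * z < m + 1"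
    "lam * (lam * z) = m"
proof -
  obtain j where j: "1 \<le> j" "lam ^ j * x = m"
    "\<And>i. i < j \<Longrightarrow> lam ^ i * x \<in> Z \<and> m < lam ^ i * x \<and> lam ^ i * x < m + 1"
    using strip_descent[OF assms(1-3)] by blast
  have "j \<noteq> 1" using j(2) assms(4) by auto
  define i where "i = j - 2"
  have j_eq: "j = Suc (Suc i)" using j(1) \<open>j \<noteq> 1\<close> unfolding i_def by simp
  have "lam * (lam * (lam ^ i * x)) = m" using j(2) by (simp add: j_eq mult.assoc)
  then show thesis using j(3)[of i] j(3)[of "Suc i"] by (intro that) (auto simp: j_eq mult.assoc)
qed

lemma min_not_even: "\<nexists>j::int. m = of_int (2 * j)"
proof
  assume "\<exists>j::int. m = of_int (2 * j)"
  then obtain j :: int where j: "m = of_int (2 * j)" by blast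
  obtain k :: int where "m = of_int (2 * k + 1)" using min_odd_integer by blast
  then have "2 * k + 1 = 2 * j" using j of_int_eq_iff by metis
  then show False by presburger
qed

lemma shift_of_min_in_strip:
  assumes hyp: "\<forall>n::nat. n \<ge> 1 \<longrightarrow> lam \<noteq> 1 - 1 / (2 * real n)"
  shows "lam * (m + 1) \<in> Z" "m < lam * (m + 1)" "lam * (m + 1) < m + 1"
proof -
  show mem: "lam * (m + 1) \<in> Z" by (rule shift_mem[OF m_mem min_not_even])
  obtain k :: int where k: "0 \<le> k" "m = of_int (2 * k + 1)" using min_odd_integer by blast
  have "lam * (m + 1) \<noteq> m"
  proof
    assume "lam * (m + 1) = m"
    then have "lam = 1 - 1 / (2 * real (nat (k + 1)))"
      unfolding k(2) using k(1) by (simp add: field_simps)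
    moreover have "nat (k + 1) \<ge> 1" using k(1) by simp
    ultimately show False using hyp by blast
  qed
  then show "m < lam * (m + 1)" using m_min[OF mem] by simp
  show "lam * (m + 1) < m + 1" using lam m_pos by simp
qed

lemma min_plus_lam_mem:
  assumes "x \<in> Z" "m < x" "x < m + 1"
  shows "m + lam \<in> Z"
proof -
  obtain y where y: "y \<in> Z" "m < y" "y < m + 1" "lam * y = m"
    using strip_descent_last_step[OF assms] by blast
  have "lam * (y + 1) = m + lam" using y(4) by (simp add: algebra_simps)
  then show ?thesis using strip_shift_mem[OF y(1-3)] by simp
qed

lemma min_plus_lam_squared_mem:
  assumes z: "z \<in> Z" "m < z" "z < m + 1" "m < lam * z" "lam * z < m + 1" "lam * (lam * z) = m"
  shows "m + lam\<^sup>2 \<in> Z"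
proof -
  define q where "q = lam * (z + 1)"
  have q_mem: "q \<in> Z" unfolding q_def by (rule strip_shift_mem[OF z(1-3)])
  obtain k :: int where k: "m = of_int (2 * k + 1)" using min_odd_integer by blast
  have "m < q" "q < m + 2" unfolding q_def using z(4,5) lam by (auto simp: algebra_simps)
  have "\<nexists>j::int. q = of_int (2 * j + 1)"
  proof (intro notI, elim exE)
    fix j :: int assume "q = of_int (2 * j + 1)"
    then have "k < j" "j < k + 1" using \<open>m < q\<close> \<open>q < m + 2\<close> k by linarith+
    then show False by linarith
  qed
  then have "lam * q \<in> Z" by (rule scale_mem[OF q_mem])
  moreover have "lam * q = m + lam\<^sup>2"
    unfolding q_def using z(6) by (simp add: algebra_simps power2_eq_square)
  ultimately show ?thesis by simp
qed

lemma two_step_preimage_of_min: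
  assumes hyp: "\<forall>n::nat. n \<ge> 1 \<longrightarrow> lam \<noteq> 1 - 1 / (2 * real n)"
  obtains z where "z \<in> Z" "m < z" "z < m + 1" "m < lam * z" "lam * z < m + 1" "lam * (lam * z) = m"
proof -
  note p = shift_of_min_in_strip[OF hyp]
  have q: "m + lam \<in> Z" "m < m + lam" "m + lam < m + 1"
    using min_plus_lam_mem[OF p] lam by auto
  show thesis
  proof (cases "lam * (m + lam) = m")
    case False
    then show thesis using strip_descent_last_two_steps[OF q] that by blast
  next
    case True
    have "lam * (lam * (m + 1)) \<noteq> m"
    proof
      assume "lam * (lam * (m + 1)) = m"
      then have "lam * (m + 1) = m + lam" using True lam by (metis mult_cancel_left less_irrefl)
      then show False using lam m_pos by (simp add: algebra_simps)
    qed
    then show thesis using strip_descent_last_two_steps[OF p] that by blast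
  qed
qed

text \<open>Starting from \<open>lam * (m + 1)\<close>, both \<open>m + lam\<close> and \<open>m + lam\<^sup>2\<close> lie in the
  strip, and their descents to \<open>m\<close> would have incompatible lengths.\<close>

lemma no_positive_min:
  assumes hyp: "\<forall>n::nat. n \<ge> 1 \<longrightarrow> lam \<noteq> 1 - 1 / (2 * real n)"
  shows False
proof -
  have "m + lam \<in> Z" by (rule min_plus_lam_mem[OF shift_of_min_in_strip[OF hyp]])
  then obtain j1 where j1: "lam ^ j1 * (m + lam) = m"
    using strip_descent[of "m + lam"] lam by auto
  obtain z where "z \<in> Z" "m < z" "z < m + 1" "m < lam * z" "lam * z < m + 1" "lam * (lam * z) = m"
    using two_step_preimage_of_min[OF hyp] by blast
  then have "m + lam\<^sup>2 \<in> Z" by (rule min_plus_lam_squared_mem)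
  moreover have "lam\<^sup>2 < 1" using lam by (simp add: power_less_one_iff)
  ultimately obtain j2 where j2: "lam ^ j2 * (m + lam\<^sup>2) = m"
    using strip_descent[of "m + lam\<^sup>2"] lam by auto
  show False by (rule descent_exponents_incompatible[OF lam m_pos j1 j2])
qed

end

lemma zero_mem:
  assumes "Z \<noteq> {}" and "\<forall>n::nat. n \<ge> 1 \<longrightarrow> lam \<noteq> 1 - 1 / (2 * real n)"
  shows "0 \<in> Z"
proof (rule ccontr)
  assume "0 \<notin> Z"
  obtain m where m: "m \<in> Z" "\<And>z. z \<in> Z \<Longrightarrow> m \<le> z"
    using compact_attains_inf[OF compact_Z assms(1)] by blast
  have "0 < m" using Z_nonneg[OF m(1)] m(1) \<open>0 \<notin> Z\<close> by (cases "m = 0") auto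
  then show False using no_positive_min[OF m _ assms(2)] by blast
qed

end

section \<open>The Bernoulli convolution\<close>

definition rademacher :: "bool \<Rightarrow> real" where
  "rademacher b = (if b then 1 else -1)"

definition coin :: "bool measure" where
  "coin = measure_pmf (pmf_of_set UNIV)"

definition bernoulli_convolution :: "real \<Rightarrow> real measure \<Rightarrow> bool" where
  "bernoulli_convolution lam M \<longleftrightarrow> prob_space M \<and> sets M = sets borel \<and>
     (\<forall>A \<in> sets borel. emeasure M A =
        (emeasure M ((\<lambda>x. lam * x + 1) -` A) + emeasure M ((\<lambda>x. lam * x - 1) -` A)) / 2)"

lemma nu_eq_The_bernoulli_convolution: "nu lam = (THE M. bernoulli_convolution lam M)"
  unfolding nu_def bernoulli_convolution_def ..

lemma bernoulli_convolution_real_distribution: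
  "bernoulli_convolution lam M \<Longrightarrow> real_distribution M"
  unfolding bernoulli_convolution_def real_distribution_def real_distribution_axioms_def by auto

lemma integral_coin: "(\<integral>b. f b \<partial>coin) = (f True + f False) / (2::real)"
  unfolding coin_def by (simp add: integral_pmf_of_set UNIV_bool)

lemma nn_integral_coin: "(\<integral>\<^sup>+b. f b \<partial>coin) = (f True + f False) / 2"
  unfolding coin_def by (simp add: nn_integral_pmf_of_set UNIV_bool add.commute)

lemma measurable_bernoulli_convolution_branches:
  assumes M: "bernoulli_convolution lam M"
  shows "(\<lambda>b. distr M borel (\<lambda>x. lam * x + rademacher b)) \<in> coin \<rightarrow>\<^sub>M subprob_algebra borel"
proof -
  interpret prob_space M using M unfolding bernoulli_convolution_def by auto
  have sM: "sets M = sets borel" using M unfolding bernoulli_convolution_def by auto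
  show ?thesis
    unfolding coin_def measurable_count_space_eq1 measurable_cong_sets[OF sets_measure_pmf_count_space refl]
    by (auto simp: space_subprob_algebra measurable_cong_sets[OF sM refl]
             intro!: prob_space_imp_subprob_space prob_space_distr)
qed

lemma bernoulli_convolution_eq_bind:
  assumes M: "bernoulli_convolution lam M"
  shows "M = coin \<bind> (\<lambda>b. distr M borel (\<lambda>x. lam * x + rademacher b))"
proof -
  interpret prob_space M using M unfolding bernoulli_convolution_def by auto
  have sM: "sets M = sets borel" using M unfolding bernoulli_convolution_def by auto
  let ?N = "\<lambda>b. distr M borel (\<lambda>x. lam * x + rademacher b)"
  note N = measurable_bernoulli_convolution_branches[OF M]
  show ?thesis
  proof (rule measure_eqI)
    show "sets M = sets (coin \<bind> ?N)"
    proof -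
      have "sets (coin \<bind> ?N) = sets borel"
        by (rule sets_bind) (auto simp: coin_def)
      then show ?thesis using sM by simp
    qed
    fix A assume "A \<in> sets M"
    then have A: "A \<in> sets borel" using sM by simp
    have "emeasure (coin \<bind> ?N) A = (\<integral>\<^sup>+b. emeasure (?N b) A \<partial>coin)"
      by (rule emeasure_bind[OF _ N A]) (simp add: coin_def)
    also have "\<dots> = (emeasure M ((\<lambda>x. lam * x + 1) -` A) + emeasure M ((\<lambda>x. lam * x - 1) -` A)) / 2"
    proof -
      have "emeasure (?N b) A = emeasure M ((\<lambda>x. lam * x + rademacher b) -` A)" for b
        using A sets_eq_imp_space_eq[OF sM]
        by (subst emeasure_distr) (auto simp: measurable_cong_sets[OF sM refl])
      then show ?thesis by (simp add: nn_integral_coin rademacher_def)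
    qed
    also have "\<dots> = emeasure M A"
      using M A unfolding bernoulli_convolution_def by simp
    finally show "emeasure M A = emeasure (coin \<bind> ?N) A" ..
  qed
qed

lemma integral_bernoulli_convolution:
  fixes v :: "real \<Rightarrow> real"
  assumes M: "bernoulli_convolution lam M"
    and v: "v \<in> borel_measurable borel" and bounded: "\<And>x. \<bar>v x\<bar> \<le> B"
  shows "(\<integral>x. v x \<partial>M) = ((\<integral>x. v (lam * x + 1) \<partial>M) + (\<integral>x. v (lam * x - 1) \<partial>M)) / 2"
proof -
  have sM: "sets M = sets borel" using M unfolding bernoulli_convolution_def by auto
  let ?N = "\<lambda>b. distr M borel (\<lambda>x. lam * x + rademacher b)"
  have "(\<integral>x. v x \<partial>M) = (\<integral>x. v x \<partial>(coin \<bind> ?N))"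
    by (rule arg_cong[OF bernoulli_convolution_eq_bind[OF M]])
  also have "\<dots> = (\<integral>b. (\<integral>x. v x \<partial>?N b) \<partial>coin)"
  proof (rule integral_bind[OF v _ measurable_bernoulli_convolution_branches[OF M]])
    show "\<bar>v x\<bar> \<le> B" for x by (rule bounded)
    show "finite_measure coin" unfolding coin_def by (rule measure_pmf.finite_measure_axioms)
    have "prob_space (?N b)" for b
      using M unfolding bernoulli_convolution_def
      by (auto intro!: prob_space.prob_space_distr simp: measurable_cong_sets[OF sM refl])
    then show "AE b in coin. emeasure (?N b) (space (?N b)) \<le> ennreal 1"
      by (intro AE_I2) (metis prob_space.emeasure_space_1 order_refl ennreal_1)
  qed
  also have "\<dots> = ((\<integral>x. v (lam * x + 1) \<partial>M) + (\<integral>x. v (lam * x - 1) \<partial>M)) / 2"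
  proof -
    have "(\<integral>x. v x \<partial>?N b) = (\<integral>x. v (lam * x + rademacher b) \<partial>M)" for b
      by (rule integral_distr) (auto simp: measurable_cong_sets[OF sM refl] v)
    then show ?thesis by (simp add: integral_coin rademacher_def)
  qed
  finally show ?thesis .
qed

lemma integral_bernoulli_convolution_complex:
  fixes v :: "real \<Rightarrow> complex"
  assumes M: "bernoulli_convolution lam M"
    and v: "v \<in> borel_measurable borel" and bounded: "\<And>x. norm (v x) \<le> B"
  shows "(\<integral>x. v x \<partial>M) = ((\<integral>x. v (lam * x + 1) \<partial>M) + (\<integral>x. v (lam * x - 1) \<partial>M)) / 2"
proof -
  have sM: "sets M = sets borel" using M unfolding bernoulli_convolution_def by auto
  interpret prob_space M using M unfolding bernoulli_convolution_def by auto
  have int: "integrable M (\<lambda>x. v (a * x + c))" for a c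
    by (rule integrable_const_bound[where B=B])
       (auto simp: bounded measurable_cong_sets[OF sM refl] intro!: measurable_compose[OF _ v])
  have Re: "\<bar>Re (v x)\<bar> \<le> B" and Im: "\<bar>Im (v x)\<bar> \<le> B" for x
    using abs_Re_le_cmod abs_Im_le_cmod bounded order_trans by blast+
  have "(\<integral>x. Re (v x) \<partial>M) = ((\<integral>x. Re (v (lam * x + 1)) \<partial>M) + (\<integral>x. Re (v (lam * x - 1)) \<partial>M)) / 2"
    by (rule integral_bernoulli_convolution[OF M _ Re]) (use v in simp)
  moreover have "(\<integral>x. Im (v x) \<partial>M) = ((\<integral>x. Im (v (lam * x + 1)) \<partial>M) + (\<integral>x. Im (v (lam * x - 1)) \<partial>M)) / 2"
    by (rule integral_bernoulli_convolution[OF M _ Im]) (use v in simp)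
  ultimately show ?thesis
    using int[of 1 0] int[of lam 1] int[of lam "-1"]
    by (intro complex_eqI) simp_all
qed

lemma char_bernoulli_convolution:
  assumes M: "bernoulli_convolution lam M"
  shows "char M t = complex_of_real (cos t) * char M (lam * t)"
proof -
  interpret real_distribution M using bernoulli_convolution_real_distribution[OF M] .
  have sum: "iexp (t * (lam * x + 1)) + iexp (t * (lam * x - 1)) = 2 * cos t * iexp (lam * t * x)" for x
    by (simp add: cos_exp_eq exp_add[symmetric] exp_diff[symmetric] algebra_simps
        flip: cos_of_real)
  have "char M t = ((\<integral>x. iexp (t * (lam * x + 1)) \<partial>M) + (\<integral>x. iexp (t * (lam * x - 1)) \<partial>M)) / 2"
    unfolding char_def
    by (rule integral_bernoulli_convolution_complex[OF M, where B=1]) auto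
  also have "\<dots> = (\<integral>x. iexp (t * (lam * x + 1)) + iexp (t * (lam * x - 1)) \<partial>M) / 2"
    by (simp add: integrable_iexp)
  also have "\<dots> = cos t * char M (lam * t)"
    unfolding sum char_def by simp
  finally show ?thesis .
qed

lemma char_bernoulli_convolution_iterate:
  assumes M: "bernoulli_convolution lam M"
  shows "char M t = (\<Prod>k<n. complex_of_real (cos (lam ^ k * t))) * char M (lam ^ n * t)"
proof (induction n)
  case (Suc n)
  have "char M (lam ^ n * t) = complex_of_real (cos (lam ^ n * t)) * char M (lam ^ Suc n * t)"
    using char_bernoulli_convolution[OF M, of "lam ^ n * t"] by (simp add: mult_ac)
  with Suc show ?case by (simp add: mult.assoc)
qed simp

text \<open>Iterating \<open>char M t = cos t * char M (lam * t)\<close> moves the argument towards \<open>0\<close>,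
  where every characteristic function equals \<open>1\<close>.\<close>

lemma bernoulli_convolution_unique:
  assumes lam: "0 < lam" "lam < 1"
    and M1: "bernoulli_convolution lam M1" and M2: "bernoulli_convolution lam M2"
  shows "M1 = M2"
proof (rule Levy_uniqueness)
  interpret M1: real_distribution M1 by (rule bernoulli_convolution_real_distribution[OF M1])
  interpret M2: real_distribution M2 by (rule bernoulli_convolution_real_distribution[OF M2])
  show "real_distribution M1" "real_distribution M2" ..
  show "char M1 = char M2"
  proof
    fix t
    define d where "d n = char M1 (lam ^ n * t) - char M2 (lam ^ n * t)" for n
    have "(\<lambda>n. lam ^ n * t) \<longlonglongrightarrow> 0"
      using LIMSEQ_power_zero[of lam] lam by (auto intro: tendsto_mult_left_zero)
    then have "d \<longlonglongrightarrow> char M1 0 - char M2 0"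
      unfolding d_def by (intro tendsto_diff isCont_tendsto_compose[OF M1.isCont_char]
          isCont_tendsto_compose[OF M2.isCont_char])
    then have d0: "(\<lambda>n. norm (d n)) \<longlonglongrightarrow> 0"
      by (simp add: M1.char_zero M2.char_zero tendsto_norm_zero)
    have "norm (char M1 t - char M2 t) \<le> norm (d n)" for n
    proof -
      have "char M1 t - char M2 t = (\<Prod>k<n. complex_of_real (cos (lam ^ k * t))) * d n"
        unfolding d_def char_bernoulli_convolution_iterate[OF M1, of t n]
          char_bernoulli_convolution_iterate[OF M2, of t n] by (simp add: right_diff_distrib)
      moreover have "norm (\<Prod>k<n. complex_of_real (cos (lam ^ k * t))) \<le> 1"
        by (simp add: prod_norm[symmetric] prod_le_1 del: of_real_prod)
      ultimately show ?thesis
        by (metis mult_left_le_one_le norm_ge_zero norm_mult)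
    qed
    then have "norm (char M1 t - char M2 t) \<le> 0"
      using LIMSEQ_le_const[OF d0] by blast
    then show "char M1 t = char M2 t" by simp
  qed
qed

definition bernoulli_series :: "real \<Rightarrow> bool stream \<Rightarrow> real" where
  "bernoulli_series lam s = (\<Sum>k. lam ^ k * rademacher (s !! k))"

lemma summable_bernoulli_series:
  assumes "0 < lam" "lam < 1"
  shows "summable (\<lambda>k. lam ^ k * rademacher (s !! k))"
proof (rule summable_comparison_test')
  show "summable (\<lambda>k. lam ^ k)" using assms by (simp add: summable_geometric)
  show "norm (lam ^ k * rademacher (s !! k)) \<le> lam ^ k" for k
    using assms by (simp add: rademacher_def abs_mult)
qed

lemma bernoulli_series_Stream:
  assumes "0 < lam" "lam < 1"
  shows "bernoulli_series lam (b ## s) = rademacher b + lam * bernoulli_series lam s"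
  using suminf_split_head[OF summable_bernoulli_series[OF assms, of "b ## s"]]
    suminf_mult[OF summable_bernoulli_series[OF assms, of s], of lam]
  unfolding bernoulli_series_def by (simp add: mult.assoc)

lemma measurable_bernoulli_series [measurable]:
  "bernoulli_series lam \<in> borel_measurable (stream_space coin)"
  unfolding bernoulli_series_def rademacher_def coin_def by measurable

lemma bernoulli_convolution_distr_bernoulli_series:
  assumes lam: "0 < lam" "lam < 1"
  shows "bernoulli_convolution lam (distr (stream_space coin) borel (bernoulli_series lam))"
    (is "bernoulli_convolution lam ?N")
proof -
  interpret coin: prob_space coin unfolding coin_def by (rule prob_space_measure_pmf)
  interpret S: prob_space "stream_space coin" by (rule coin.prob_space_stream_space)
  have "emeasure ?N A =
      (emeasure ?N ((\<lambda>x. lam * x + 1) -` A) + emeasure ?N ((\<lambda>x. lam * x - 1) -` A)) / 2"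
    if A: "A \<in> sets borel" for A
  proof -
    let ?S = "space (stream_space coin)"
    have "emeasure ?N A = emeasure (stream_space coin) (bernoulli_series lam -` A \<inter> ?S)"
      by (rule emeasure_distr[OF measurable_bernoulli_series A])
    also have "\<dots> = (\<integral>\<^sup>+b. emeasure (stream_space coin)
        {s \<in> ?S. b ## s \<in> bernoulli_series lam -` A \<inter> ?S} \<partial>coin)"
      by (rule coin.emeasure_stream_space) (rule measurable_sets[OF measurable_bernoulli_series A])
    also have "\<dots> = (\<integral>\<^sup>+b. emeasure ?N ((\<lambda>x. lam * x + rademacher b) -` A) \<partial>coin)"
    proof (rule nn_integral_cong)
      fix b
      have "{s \<in> ?S. b ## s \<in> bernoulli_series lam -` A \<inter> ?S}
          = bernoulli_series lam -` ((\<lambda>x. lam * x + rademacher b) -` A) \<inter> ?S"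
        using bernoulli_series_Stream[OF lam]
        by (auto simp: stream_space_Stream coin_def add.commute)
      moreover have "(\<lambda>x. lam * x + rademacher b) -` A \<in> sets borel"
        by (rule measurable_sets_borel[OF _ A]) simp
      ultimately show "emeasure (stream_space coin) {s \<in> ?S. b ## s \<in> bernoulli_series lam -` A \<inter> ?S}
          = emeasure ?N ((\<lambda>x. lam * x + rademacher b) -` A)"
        by (simp add: emeasure_distr)
    qed
    also have "\<dots> = (emeasure ?N ((\<lambda>x. lam * x + 1) -` A) + emeasure ?N ((\<lambda>x. lam * x - 1) -` A)) / 2"
      by (simp add: nn_integral_coin rademacher_def)
    finally show ?thesis .
  qed
  then show ?thesis
    unfolding bernoulli_convolution_def by (auto intro: S.prob_space_distr)
qed

lemma bernoulli_convolution_nu: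
  assumes "0 < lam" "lam < 1"
  shows "bernoulli_convolution lam (nu lam)"
proof -
  note N = bernoulli_convolution_distr_bernoulli_series[OF assms]
  show ?thesis
    unfolding nu_eq_The_bernoulli_convolution
    by (rule theI[where P="bernoulli_convolution lam", OF N])
       (rule bernoulli_convolution_unique[OF assms _ N])
qed

section \<open>The attractor\<close>

text \<open>The fixed point of \<open>tau lam (1/4)\<close>.\<close>

definition attractor_bound :: "real \<Rightarrow> real" where
  "attractor_bound lam = lam / (4 * (1 - lam))"

definition is_attractor :: "real \<Rightarrow> real set \<Rightarrow> bool" where
  "is_attractor lam X \<longleftrightarrow> X \<noteq> {} \<and> compact X \<and> X = tau lam 0 ` X \<union> tau lam (1/4) ` X"

lemma XL_eq_The_is_attractor: "XL lam = (THE X. is_attractor lam X)"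
  unfolding XL_def is_attractor_def ..

fun attractor_approx :: "real \<Rightarrow> nat \<Rightarrow> real set" where
  "attractor_approx lam 0 = {0..attractor_bound lam}"
| "attractor_approx lam (Suc n) =
     tau lam 0 ` attractor_approx lam n \<union> tau lam (1/4) ` attractor_approx lam n"

lemma continuous_on_tau: "continuous_on S (tau lam d)"
  unfolding tau_def by (intro continuous_intros)

lemma compact_attractor_approx: "compact (attractor_approx lam n)"
  by (induction n) (simp_all add: compact_Un compact_continuous_image continuous_on_tau)

context
  fixes lam :: real
  assumes lam: "0 < lam" "lam < 1"
begin

lemma tau_mem_attractor_interval:
  assumes "x \<in> {0..attractor_bound lam}" "0 \<le> d" "d \<le> 1/4"
  shows "tau lam d x \<in> {0..attractor_bound lam}"
proof -
  have "lam * (x + d) \<le> lam * (attractor_bound lam + 1/4)"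
    using assms lam by (intro mult_left_mono) auto
  also have "\<dots> = attractor_bound lam"
    using lam unfolding attractor_bound_def by (simp add: field_simps)
  finally show ?thesis using assms lam unfolding tau_def by simp
qed

lemma decseq_attractor_approx: "decseq (attractor_approx lam)"
proof (rule decseq_SucI)
  show "attractor_approx lam (Suc n) \<subseteq> attractor_approx lam n" for n
  proof (induction n)
    case 0 then show ?case using tau_mem_attractor_interval by auto
  next
    case (Suc n)
    then show ?case by (subst (1 2) attractor_approx.simps(2)) blast
  qed
qed

lemma attractor_approx_nonempty: "attractor_approx lam n \<noteq> {}"
  using lam by (induction n) (auto simp: attractor_bound_def)

lemma is_attractor_INT_attractor_approx: "is_attractor lam (\<Inter>n. attractor_approx lam n)"
  unfolding is_attractor_def
proof (intro conjI)
  let ?A = "attractor_approx lam" and ?K = "\<Inter>n. attractor_approx lam n"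
  show "?K \<noteq> {}"
    by (rule compact_nest[OF compact_attractor_approx attractor_approx_nonempty])
       (use decseq_attractor_approx in \<open>simp add: decseq_def\<close>)
  have "compact (?A 0 \<inter> ?K)"
    by (intro compact_Int_closed compact_attractor_approx closed_INT ballI compact_imp_closed)
  moreover have "?A 0 \<inter> ?K = ?K" by blast
  ultimately show "compact ?K" by simp
  have inj: "inj (tau lam d)" for d using lam by (auto simp: inj_def tau_def)
  have img: "tau lam d ` ?K = (\<Inter>n. tau lam d ` ?A n)" for d
    by (rule image_INT[OF inj]) auto
  have dec: "decseq (\<lambda>n. tau lam d ` ?A n)" for d
    using decseq_attractor_approx unfolding decseq_def by (intro allI impI image_mono) blast
  have "?K = (\<Inter>n. ?A (Suc n))"
  proof
    show "(\<Inter>n. ?A (Suc n)) \<subseteq> ?K"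
    proof
      fix x assume x: "x \<in> (\<Inter>n. ?A (Suc n))"
      have "x \<in> ?A n" for n using x decseq_SucD[OF decseq_attractor_approx, of n] by blast
      then show "x \<in> ?K" by blast
    qed
    show "?K \<subseteq> (\<Inter>n. ?A (Suc n))" by blast
  qed
  also have "\<dots> = (\<Inter>n. tau lam 0 ` ?A n) \<union> (\<Inter>n. tau lam (1/4) ` ?A n)"
    unfolding attractor_approx.simps(2) by (rule INT_Un_decseq[OF dec dec])
  also have "\<dots> = tau lam 0 ` ?K \<union> tau lam (1/4) ` ?K"
    by (simp only: img)
  finally show "?K = tau lam 0 ` ?K \<union> tau lam (1/4) ` ?K" .
qed

lemma is_attractor_subset_interval:
  assumes "is_attractor lam X"
  shows "X \<subseteq> {0..attractor_bound lam}"
proof -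
  have X: "X \<noteq> {}" "compact X" "X \<subseteq> tau lam 0 ` X \<union> tau lam (1/4) ` X"
    using assms unfolding is_attractor_def by auto
  obtain M where M: "M \<in> X" "\<And>t. t \<in> X \<Longrightarrow> t \<le> M"
    using compact_attains_sup[OF X(2,1)] by blast
  obtain m where m: "m \<in> X" "\<And>t. t \<in> X \<Longrightarrow> m \<le> t"
    using compact_attains_inf[OF X(2,1)] by blast
  obtain d y where dy: "d = 0 \<or> d = 1/4" "y \<in> X" "M = lam * (y + d)"
    using M(1) X(3) unfolding tau_def by blast
  have "M \<le> lam * (M + 1/4)"
    using dy M(2)[OF dy(2)] lam by (auto intro!: mult_left_mono)
  then have "M \<le> attractor_bound lam"
    using lam unfolding attractor_bound_def by (simp add: field_simps)
  moreover obtain d' y' where dy': "d' = 0 \<or> d' = 1/4" "y' \<in> X" "m = lam * (y' + d')"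
    using m(1) X(3) unfolding tau_def by blast
  have "lam * m \<le> m"
    using dy' m(2)[OF dy'(2)] lam by (auto intro!: mult_left_mono)
  then have "0 \<le> (1 - lam) * m" by (simp add: algebra_simps)
  then have "0 \<le> m"
    using lam by (simp add: zero_le_mult_iff)
  ultimately show ?thesis using M(2) m(2) by (meson atLeastAtMost_iff order_trans subsetI)
qed

lemma attractor_approx_near_attractor:
  assumes X: "is_attractor lam X" and x: "x \<in> attractor_approx lam n"
  shows "\<exists>x'\<in>X. dist x' x \<le> lam ^ n * attractor_bound lam"
  using x
proof (induction n arbitrary: x)
  case 0
  obtain x' where x': "x' \<in> X" using X unfolding is_attractor_def by blast
  then have "x' \<in> {0..attractor_bound lam}" using is_attractor_subset_interval[OF X] by blast
  then have "dist x' x \<le> attractor_bound lam" using 0 by (auto simp: dist_real_def)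
  then show ?case using x' by auto
next
  case (Suc n)
  then obtain d y where d: "d = 0 \<or> d = 1/4" and y: "y \<in> attractor_approx lam n" and x: "x = tau lam d y"
    by (simp only: attractor_approx.simps) blast
  obtain y' where y': "y' \<in> X" "dist y' y \<le> lam ^ n * attractor_bound lam"
    using Suc.IH[OF y] by blast
  have "tau lam d y' \<in> X" using d y'(1) X unfolding is_attractor_def by blast
  moreover have "dist (tau lam d y') x = lam * dist y' y"
    using lam unfolding x tau_def dist_real_def by (simp add: abs_mult flip: right_diff_distrib)
  moreover have "lam * dist y' y \<le> lam ^ Suc n * attractor_bound lam"
    using y'(2) lam by (simp add: mult_left_mono mult.assoc)
  ultimately show ?case by (intro bexI[where x="tau lam d y'"]) simp_all
qed

lemma is_attractor_eq_INT_attractor_approx: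
  assumes X: "is_attractor lam X"
  shows "X = (\<Inter>n. attractor_approx lam n)"
proof
  have inv: "X = tau lam 0 ` X \<union> tau lam (1/4) ` X" and "compact X"
    using X unfolding is_attractor_def by auto
  show "X \<subseteq> (\<Inter>n. attractor_approx lam n)"
  proof (intro INT_greatest)
    show "X \<subseteq> attractor_approx lam n" for n
    proof (induction n)
      case 0 then show ?case using is_attractor_subset_interval[OF X] by simp
    next
      case (Suc n) then show ?case by (subst inv) auto
    qed
  qed
  show "(\<Inter>n. attractor_approx lam n) \<subseteq> X"
  proof
    fix x assume x: "x \<in> (\<Inter>n. attractor_approx lam n)"
    have "x \<in> closure X"
      unfolding closure_approachable
    proof (intro allI impI)
      fix e :: real assume "e > 0"
      have c: "0 < attractor_bound lam" using lam unfolding attractor_bound_def by simp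
      obtain n where "lam ^ n < e / attractor_bound lam"
        using real_arch_pow_inv[of "e / attractor_bound lam" lam] \<open>e > 0\<close> c lam by auto
      then have n: "lam ^ n * attractor_bound lam < e"
        using c by (simp add: field_simps)
      obtain x' where "x' \<in> X" "dist x' x \<le> lam ^ n * attractor_bound lam"
        using attractor_approx_near_attractor[OF X, of x n] x by blast
      then show "\<exists>x'\<in>X. dist x' x < e" using n by (intro bexI[where x=x']) simp_all
    qed
    then show "x \<in> X" using \<open>compact X\<close> by (simp add: compact_imp_closed closure_closed)
  qed
qed

lemma is_attractor_XL: "is_attractor lam (XL lam)"
  unfolding XL_eq_The_is_attractor
  by (rule theI[where P="is_attractor lam", OF is_attractor_INT_attractor_approx])
     (rule is_attractor_eq_INT_attractor_approx)

end

section \<open>Words and the transfer operator\<close>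

definition transfer_op :: "real \<Rightarrow> (real \<Rightarrow> real) \<Rightarrow> real \<Rightarrow> real" where
  "transfer_op lam g x =
     Wfun lam (tau lam 0 x) * g (tau lam 0 x) + Wfun lam (tau lam (1/4) x) * g (tau lam (1/4) x)"

definition words_upto :: "nat \<Rightarrow> real list set" where
  "words_upto n = {w \<in> W0. length w \<le> n}"

lemma tau_word_Nil [simp]: "tau_word lam [] x = x"
  unfolding tau_word_def by simp

lemma tau_word_Cons [simp]: "tau_word lam (d # w) x = tau_word lam w (tau lam d x)"
  unfolding tau_word_def by simp

lemma W_word_Nil [simp]: "W_word lam [] x = 1"
  unfolding W_word_def by simp

lemma W_word_Cons: "W_word lam (d # w) x = Wfun lam (tau lam d x) * W_word lam w (tau lam d x)"
  unfolding W_word_def by (simp add: prod.lessThan_Suc_shift del: prod.lessThan_Suc)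

lemma finite_words_upto: "finite (words_upto n)"
proof (rule finite_subset)
  show "words_upto n \<subseteq> {w. set w \<subseteq> {0, 1/4} \<and> length w \<le> n}"
    unfolding words_upto_def W0_def by auto
  show "finite {w. set w \<subseteq> {0::real, 1/4} \<and> length w \<le> n}"
    by (rule finite_lists_length_le) simp
qed

lemma words_upto_0: "words_upto 0 = {[]}"
  unfolding words_upto_def W0_def by auto

lemma words_upto_Suc:
  "words_upto (Suc n) = insert [] (Cons 0 ` (words_upto n - {[]}) \<union> Cons (1/4) ` words_upto n)"
proof (rule set_eqI)
  fix w :: "real list"
  show "w \<in> words_upto (Suc n) \<longleftrightarrow> w \<in> insert [] (Cons 0 ` (words_upto n - {[]}) \<union> Cons (1/4) ` words_upto n)"
  proof (cases w)
    case (Cons d v)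
    have "v \<noteq> [] \<Longrightarrow> last (d # v) = last v" by simp
    then show ?thesis
      unfolding Cons words_upto_def W0_def by auto
  qed (simp add: words_upto_def W0_def)
qed

text \<open>Under the hypothesis on \<open>f\<close> the terms of \<open>[]\<close> and \<open>[0]\<close> coincide; this is why
  \<open>W0\<close> omits the words ending in \<open>0\<close>.\<close>

lemma sum_words_upto_Suc:
  assumes f: "\<And>x. f x = Wfun lam (tau lam 0 x) * f (tau lam 0 x)"
  shows "(\<Sum>w\<in>words_upto (Suc n). W_word lam w x * f (tau_word lam w x)) =
    transfer_op lam (\<lambda>y. \<Sum>w\<in>words_upto n. W_word lam w y * f (tau_word lam w y)) x"
proof -
  define F where "F w y = W_word lam w y * f (tau_word lam w y)" for w y
  have F_Cons: "F (d # w) y = Wfun lam (tau lam d y) * F w (tau lam d y)" for d w y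
    unfolding F_def by (simp add: W_word_Cons)
  have fin: "finite (words_upto n)" by (rule finite_words_upto)
  have Nil: "[] \<in> words_upto n" unfolding words_upto_def W0_def by simp
  have "(\<Sum>w\<in>words_upto (Suc n). F w x) =
      F [] x + (\<Sum>w\<in>words_upto n - {[]}. F (0 # w) x) + (\<Sum>w\<in>words_upto n. F ((1/4) # w) x)"
  proof -
    have "(\<Sum>w\<in>words_upto (Suc n). F w x) =
        F [] x + ((\<Sum>w\<in>Cons 0 ` (words_upto n - {[]}). F w x) + (\<Sum>w\<in>Cons (1/4) ` words_upto n. F w x))"
      unfolding words_upto_Suc using fin
      by (subst sum.insert) (auto intro!: sum.union_disjoint)
    then show ?thesis by (simp add: sum.reindex add.assoc)
  qed
  also have "F [] x + (\<Sum>w\<in>words_upto n - {[]}. F (0 # w) x) = (\<Sum>w\<in>words_upto n. F (0 # w) x)"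
    using f[of x] fin Nil by (simp add: F_def sum.remove W_word_Cons)
  finally show ?thesis
    unfolding transfer_op_def F_def[symmetric] F_Cons by (simp add: sum_distrib_left)
qed

lemma sum_words_upto_eq_transfer_op_iterate:
  assumes f: "\<And>x. f x = Wfun lam (tau lam 0 x) * f (tau lam 0 x)"
  shows "(\<lambda>x. \<Sum>w\<in>words_upto n. W_word lam w x * f (tau_word lam w x)) = (transfer_op lam ^^ n) f"
  by (induction n) (simp_all add: words_upto_0 sum_words_upto_Suc[OF f] fun_eq_iff)

section \<open>Convergence of the iterates of the transfer operator\<close>

lemma Wfun_tau: "lam \<noteq> 0 \<Longrightarrow> Wfun lam (tau lam d x) = (cos (2 * pi * (x + d)))\<^sup>2"
  unfolding Wfun_def tau_def by (simp add: mult.assoc)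

lemma Wfun_tau_quarter: "lam \<noteq> 0 \<Longrightarrow> Wfun lam (tau lam (1/4) x) = (sin (2 * pi * x))\<^sup>2"
  by (simp add: Wfun_tau distrib_left cos_add)

lemma Wfun_tau_sum: "lam \<noteq> 0 \<Longrightarrow> Wfun lam (tau lam 0 x) + Wfun lam (tau lam (1/4) x) = 1"
  using Wfun_tau_quarter[of lam x] Wfun_tau[of lam 0 x] by simp

lemma Wfun_nonneg: "0 \<le> Wfun lam x"
  unfolding Wfun_def by simp

lemma cos_two_pi_nonzero:
  assumes "\<nexists>k::int. 4 * y = of_int (2 * k + 1)"
  shows "cos (2 * pi * y) \<noteq> 0"
proof
  assume "cos (2 * pi * y) = 0"
  then obtain i :: int where "odd i" "2 * pi * y = of_int i * (pi / 2)"
    by (auto simp: cos_zero_iff_int)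
  then show False using assms by (auto simp: field_simps elim!: oddE)
qed

lemma sin_two_pi_nonzero:
  assumes "\<nexists>k::int. 4 * y = of_int (2 * k)"
  shows "sin (2 * pi * y) \<noteq> 0"
proof
  assume "sin (2 * pi * y) = 0"
  then obtain i :: int where "2 * pi * y = of_int i * pi"
    by (auto simp: sin_zero_iff_int2)
  then show False using assms by (auto simp: field_simps)
qed

lemma transfer_op_mono:
  assumes "g (tau lam 0 x) \<le> g' (tau lam 0 x)" "g (tau lam (1/4) x) \<le> g' (tau lam (1/4) x)"
  shows "transfer_op lam g x \<le> transfer_op lam g' x"
  unfolding transfer_op_def using assms by (intro add_mono mult_left_mono Wfun_nonneg)

lemma transfer_op_const: "lam \<noteq> 0 \<Longrightarrow> transfer_op lam (\<lambda>_. c) x = c"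
  unfolding transfer_op_def by (metis Wfun_tau_sum distrib_right mult_1)

lemma continuous_on_transfer_op:
  assumes "lam \<noteq> 0" and g: "continuous_on UNIV g"
  shows "continuous_on UNIV (transfer_op lam g)"
proof -
  have W: "continuous_on UNIV (Wfun lam)" unfolding Wfun_def using assms(1) by (intro continuous_intros) auto
  show ?thesis
    unfolding transfer_op_def
    by (intro continuous_on_add continuous_on_mult continuous_on_compose2[OF W continuous_on_tau]
        continuous_on_compose2[OF g continuous_on_tau]) auto
qed

lemma le_transfer_op:
  assumes "f x = Wfun lam (tau lam 0 x) * f (tau lam 0 x)" "0 \<le> f (tau lam (1/4) x)"
  shows "f x \<le> transfer_op lam f x"
  using assms Wfun_nonneg[of lam "tau lam (1/4) x"] unfolding transfer_op_def by simp

lemma transfer_op_iterate_bounds: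
  assumes "lam \<noteq> 0" "\<And>t. 0 \<le> f t" "\<And>t. f t \<le> 1"
  shows "0 \<le> (transfer_op lam ^^ n) f x \<and> (transfer_op lam ^^ n) f x \<le> 1"
proof (induction n arbitrary: x)
  case (Suc n)
  have "transfer_op lam (\<lambda>_. 0) x \<le> (transfer_op lam ^^ Suc n) f x"
    "(transfer_op lam ^^ Suc n) f x \<le> transfer_op lam (\<lambda>_. 1) x"
    using Suc.IH by (simp_all add: transfer_op_mono)
  then show ?case using assms(1) by (simp add: transfer_op_const)
qed (use assms in simp)

lemma transfer_op_iterate_incseq:
  assumes "\<And>t. f t \<le> transfer_op lam f t"
  shows "incseq (\<lambda>n. (transfer_op lam ^^ n) f x)"
proof (rule incseq_SucI)
  show "(transfer_op lam ^^ n) f x \<le> (transfer_op lam ^^ Suc n) f x" for n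
  proof (induction n arbitrary: x)
    case (Suc n)
    have "transfer_op lam ((transfer_op lam ^^ n) f) x \<le> transfer_op lam ((transfer_op lam ^^ Suc n) f) x"
      by (intro transfer_op_mono Suc.IH)
    then show ?case by simp
  qed (simp add: assms)
qed

lemma continuous_on_transfer_op_iterate:
  "lam \<noteq> 0 \<Longrightarrow> continuous_on UNIV f \<Longrightarrow> continuous_on UNIV ((transfer_op lam ^^ n) f)"
  by (induction n) (simp_all add: continuous_on_transfer_op)

lemma transfer_op_fixed_point_min:
  assumes "lam \<noteq> 0" and fixed: "h y = transfer_op lam h y" and min: "h y = m"
    "m \<le> h (tau lam 0 y)" "m \<le> h (tau lam (1/4) y)"
  shows "0 < Wfun lam (tau lam 0 y) \<Longrightarrow> h (tau lam 0 y) = m"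
    and "0 < Wfun lam (tau lam (1/4) y) \<Longrightarrow> h (tau lam (1/4) y) = m"
proof -
  let ?a = "Wfun lam (tau lam 0 y)" and ?b = "Wfun lam (tau lam (1/4) y)"
  have "?a * (h (tau lam 0 y) - m) + ?b * (h (tau lam (1/4) y) - m) = h y - (?a + ?b) * m"
    using fixed unfolding transfer_op_def by (simp add: algebra_simps)
  also have "\<dots> = 0" using min(1) Wfun_tau_sum[OF assms(1)] by simp
  finally have "?a * (h (tau lam 0 y) - m) + ?b * (h (tau lam (1/4) y) - m) = 0" .
  moreover have "0 \<le> ?a * (h (tau lam 0 y) - m)" "0 \<le> ?b * (h (tau lam (1/4) y) - m)"
    using min(2,3) by (simp_all add: Wfun_nonneg)
  ultimately have "?a * (h (tau lam 0 y) - m) = 0" "?b * (h (tau lam (1/4) y) - m) = 0"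
    by (simp_all add: add_nonneg_eq_0_iff)
  then show "0 < ?a \<Longrightarrow> h (tau lam 0 y) = m" "0 < ?b \<Longrightarrow> h (tau lam (1/4) y) = m"
    by simp_all
qed

text \<open>On \<open>u = 4 y\<close> the weights \<open>cos\<^sup>2 (2 pi y)\<close> and \<open>sin\<^sup>2 (2 pi y)\<close> of the two
  branches vanish exactly at the odd resp. even integers.\<close>

lemma branch_closed_set_scaled:
  assumes lam: "0 < lam" "lam < 1" and Z: "compact Z" "\<And>y. y \<in> Z \<Longrightarrow> 0 \<le> y"
    and branch0: "\<And>y. y \<in> Z \<Longrightarrow> 0 < Wfun lam (tau lam 0 y) \<Longrightarrow> tau lam 0 y \<in> Z"
    and branch1: "\<And>y. y \<in> Z \<Longrightarrow> 0 < Wfun lam (tau lam (1/4) y) \<Longrightarrow> tau lam (1/4) y \<in> Z"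
  shows "branch_closed_set lam ((\<lambda>y. 4 * y) ` Z)"
proof
  show "compact ((\<lambda>y. 4 * y) ` Z)"
    by (intro compact_continuous_image Z(1) continuous_intros)
  show "0 \<le> u" if "u \<in> (\<lambda>y. 4 * y) ` Z" for u
    using that Z(2) by auto
  show "lam * u \<in> (\<lambda>y. 4 * y) ` Z"
    if u: "u \<in> (\<lambda>y. 4 * y) ` Z" and not_odd: "\<nexists>k::int. u = of_int (2 * k + 1)" for u
  proof -
    obtain y where y: "y \<in> Z" "u = 4 * y" using u by blast
    have "0 < Wfun lam (tau lam 0 y)"
      using cos_two_pi_nonzero[of y] not_odd y(2) lam by (simp add: Wfun_tau)
    then have "tau lam 0 y \<in> Z" using branch0[OF y(1)] by simp
    moreover have "lam * u = 4 * tau lam 0 y" using y(2) by (simp add: tau_def)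
    ultimately show ?thesis by blast
  qed
  show "lam * (u + 1) \<in> (\<lambda>y. 4 * y) ` Z"
    if u: "u \<in> (\<lambda>y. 4 * y) ` Z" and not_even: "\<nexists>k::int. u = of_int (2 * k)" for u
  proof -
    obtain y where y: "y \<in> Z" "u = 4 * y" using u by blast
    have "0 < Wfun lam (tau lam (1/4) y)"
      using sin_two_pi_nonzero[of y] not_even y(2) lam by (simp add: Wfun_tau_quarter)
    then have "tau lam (1/4) y \<in> Z" using branch1[OF y(1)] by simp
    moreover have "lam * (u + 1) = 4 * tau lam (1/4) y" using y(2) by (simp add: tau_def algebra_simps)
    ultimately show ?thesis by blast
  qed
qed (use lam in auto)

lemma limit_eq_one_on_invariant_set:
  fixes S :: "nat \<Rightarrow> real \<Rightarrow> real"
  assumes lam: "0 < lam" "lam < 1"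
    and hyp: "\<forall>n::nat. n \<ge> 1 \<longrightarrow> lam \<noteq> 1 - 1 / (2 * real n)"
    and X: "compact X" "\<And>x. x \<in> X \<Longrightarrow> 0 \<le> x"
      "\<And>x. x \<in> X \<Longrightarrow> tau lam 0 x \<in> X" "\<And>x. x \<in> X \<Longrightarrow> tau lam (1/4) x \<in> X"
    and S: "\<And>n. continuous_on UNIV (S n)" "\<And>x. incseq (\<lambda>n. S n x)" "S 0 0 = 1"
    and lim: "\<And>x. (\<lambda>n. S n x) \<longlonglongrightarrow> h x"
    and h: "\<And>x. h x \<le> 1" "\<And>x. h x = transfer_op lam h x"
    and x: "x \<in> X"
  shows "h x = 1"
proof -
  have S_le_h: "S n y \<le> h y" for n y by (rule incseq_le[OF S(2) lim])
  obtain x0 where x0: "x0 \<in> X" "\<And>y. y \<in> X \<Longrightarrow> h x0 \<le> h y"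
    using incseq_limit_attains_inf[OF X(1) _ continuous_on_subset[OF S(1)] S(2) lim] x by blast
  define Z where "Z = {y \<in> X. h y = h x0}"
  have "Z = X \<inter> (\<Inter>n. {y. S n y \<le> h x0})"
  proof -
    have "h y \<le> h x0 \<longleftrightarrow> (\<forall>n. S n y \<le> h x0)" for y
      using S_le_h LIMSEQ_le_const2[OF lim] by (meson order_trans)
    then show ?thesis unfolding Z_def using x0(2) by (force intro: antisym)
  qed
  then have "compact Z"
    by (simp only:) (intro compact_Int_closed X(1) closed_INT ballI closed_Collect_le S(1) continuous_on_const)
  have "branch_closed_set lam ((\<lambda>y. 4 * y) ` Z)"
  proof (rule branch_closed_set_scaled[OF lam \<open>compact Z\<close>])
    fix y assume y: "y \<in> Z"
    then have yX: "y \<in> X" and "h y = h x0" unfolding Z_def by auto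
    note children = transfer_op_fixed_point_min[OF _ h(2) this(2) x0(2)[OF X(3)[OF yX]] x0(2)[OF X(4)[OF yX]]]
    show "0 \<le> y" using X(2)[OF yX] .
    show "tau lam 0 y \<in> Z" if "0 < Wfun lam (tau lam 0 y)"
      using children(1) that lam X(3)[OF yX] unfolding Z_def by simp
    show "tau lam (1/4) y \<in> Z" if "0 < Wfun lam (tau lam (1/4) y)"
      using children(2) that lam X(4)[OF yX] unfolding Z_def by simp
  qed
  then have "0 \<in> Z"
    using branch_closed_set.zero_mem[OF _ _ hyp] x0(1) unfolding Z_def by force
  then have "1 \<le> h x0" using S_le_h[of 0 0] S(3) unfolding Z_def by simp
  then show ?thesis using x0(2)[OF x] h(1)[of x] by simp
qed

lemma transfer_op_iterate_uniform_limit: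
  assumes lam: "0 < lam" "lam < 1"
    and hyp: "\<forall>n::nat. n \<ge> 1 \<longrightarrow> lam \<noteq> 1 - 1 / (2 * real n)"
    and f: "continuous_on UNIV f" "f 0 = 1" "\<And>t. 0 \<le> f t" "\<And>t. f t \<le> 1"
      "\<And>t. f t = Wfun lam (tau lam 0 t) * f (tau lam 0 t)"
    and X: "compact X" "\<And>x. x \<in> X \<Longrightarrow> 0 \<le> x"
      "\<And>x. x \<in> X \<Longrightarrow> tau lam 0 x \<in> X" "\<And>x. x \<in> X \<Longrightarrow> tau lam (1/4) x \<in> X"
  shows "uniform_limit X (\<lambda>n. (transfer_op lam ^^ n) f) (\<lambda>_. 1) sequentially"
proof -
  define S where "S n = (transfer_op lam ^^ n) f" for n
  have lam0: "lam \<noteq> 0" using lam by simp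
  have cont: "continuous_on UNIV (S n)" for n
    unfolding S_def by (rule continuous_on_transfer_op_iterate[OF lam0 f(1)])
  have bounds: "0 \<le> S n x \<and> S n x \<le> 1" for n x
    unfolding S_def by (rule transfer_op_iterate_bounds[OF lam0 f(3,4)])
  have inc: "incseq (\<lambda>n. S n x)" for x
    unfolding S_def using f(3,5) by (intro transfer_op_iterate_incseq le_transfer_op)
  define h where "h x = (SUP n. S n x)" for x
  have lim: "(\<lambda>n. S n x) \<longlonglongrightarrow> h x" for x
    unfolding h_def using bounds by (intro LIMSEQ_incseq_SUP inc bdd_aboveI[where M=1]) auto
  have "S (Suc n) = transfer_op lam (S n)" for n by (simp add: S_def)
  then have "(\<lambda>n. S (Suc n) x) \<longlonglongrightarrow> transfer_op lam h x" for x
    unfolding transfer_op_def by (simp only:) (intro tendsto_intros lim)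
  then have fixed: "h x = transfer_op lam h x" for x
    using LIMSEQ_unique LIMSEQ_Suc[OF lim] by blast
  have h_le: "h x \<le> 1" for x
    by (rule LIMSEQ_le_const2[OF lim]) (use bounds in auto)
  have "S 0 0 = 1" by (simp add: S_def f(2))
  then have "(\<lambda>n. S n x) \<longlonglongrightarrow> 1" if "x \<in> X" for x
    using lim[of x] limit_eq_one_on_invariant_set[OF lam hyp X cont inc _ lim h_le fixed that] by simp
  then show ?thesis
    unfolding S_def[symmetric]
    by (intro uniform_limit_incseq_Dini X(1) continuous_on_subset[OF cont] continuous_on_const inc)
       auto
qed

section \<open>The Fourier transform of the Bernoulli convolution\<close>

lemma nu_hat_eq_char: "nu_hat lam t = char (nu lam) (2 * pi * t)"
  unfolding nu_hat_def char_def cis_conv_exp by (simp add: mult_ac)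

context
  fixes lam :: real
  assumes lam: "0 < lam" "lam < 1"
begin

interpretation nu: real_distribution "nu lam"
  by (rule bernoulli_convolution_real_distribution[OF bernoulli_convolution_nu[OF lam]])

lemma nu_hat_0: "nu_hat lam 0 = 1"
  by (simp add: nu_hat_eq_char nu.char_zero)

lemma norm_nu_hat_le_1: "norm (nu_hat lam t) \<le> 1"
  by (simp add: nu_hat_eq_char nu.cmod_char_le_1)

lemma continuous_on_nu_hat: "continuous_on UNIV (nu_hat lam)"
  unfolding nu_hat_eq_char continuous_on_eq_continuous_at[OF open_UNIV]
  by (intro ballI continuous_intros isCont_o2[OF _ nu.isCont_char])

lemma nu_hat_tau_0: "nu_hat lam t = cos (2 * pi * t) * nu_hat lam (tau lam 0 t)"
  using char_bernoulli_convolution[OF bernoulli_convolution_nu[OF lam], of "2 * pi * t"]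
  by (simp add: nu_hat_eq_char tau_def mult_ac)

lemma power2_norm_nu_hat_tau_0:
  "(cmod (nu_hat lam t))\<^sup>2 = Wfun lam (tau lam 0 t) * (cmod (nu_hat lam (tau lam 0 t)))\<^sup>2"
  using lam by (subst nu_hat_tau_0) (simp add: Wfun_tau norm_mult power_mult_distrib)

lemma S_partial_eq_transfer_op_iterate:
  "S_partial lam n = (transfer_op lam ^^ n) (\<lambda>t. (cmod (nu_hat lam t))\<^sup>2)"
  using sum_words_upto_eq_transfer_op_iterate[OF power2_norm_nu_hat_tau_0]
  unfolding S_partial_def words_upto_def by (simp add: fun_eq_iff)

end

theorem proposition4p11:
  fixes lam :: real
  assumes "0 < lam" and "lam < 1"
    and "\<forall>n::nat. n \<ge> 1 \<longrightarrow> lam \<noteq> 1 - 1 / (2 * real n)"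
  shows "uniform_limit (XL lam) (\<lambda>n x. S_partial lam n x) (\<lambda>x. 1) sequentially"
proof -
  have XL: "compact (XL lam)" "XL lam \<subseteq> {0..attractor_bound lam}"
    "XL lam = tau lam 0 ` XL lam \<union> tau lam (1/4) ` XL lam"
    using is_attractor_XL is_attractor_subset_interval[OF _ _ is_attractor_XL] assms(1,2)
    unfolding is_attractor_def by auto
  have "uniform_limit (XL lam) (\<lambda>n. (transfer_op lam ^^ n) (\<lambda>t. (cmod (nu_hat lam t))\<^sup>2)) (\<lambda>_. 1)
      sequentially"
  proof (rule transfer_op_iterate_uniform_limit[OF assms])
    show "continuous_on UNIV (\<lambda>t. (cmod (nu_hat lam t))\<^sup>2)"
      using continuous_on_nu_hat[OF assms(1,2)] by (intro continuous_intros)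
    show "(cmod (nu_hat lam t))\<^sup>2 \<le> 1" for t
      using norm_nu_hat_le_1[OF assms(1,2)] by (simp add: power_le_one)
    show "(cmod (nu_hat lam t))\<^sup>2 = Wfun lam (tau lam 0 t) * (cmod (nu_hat lam (tau lam 0 t)))\<^sup>2" for t
      by (rule power2_norm_nu_hat_tau_0[OF assms(1,2)])
  qed (use XL nu_hat_0[OF assms(1,2)] in auto)
  then show ?thesis
    by (simp add: S_partial_eq_transfer_op_iterate[OF assms(1,2)])
qed

end
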